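(* For $i\neq j$ let $a_{ij}=\frac{(n-1)(2-\omega_i-\omega_j)\eta}{n}$. For any constant $\varepsilon\in(0,\eta)$ let $c_\varepsilon=\min\{\max_{i\ne j}a_{ij}-2\varepsilon,1\}$. Then the set $E_{c_\varepsilon}=\{(x_1,\dots,x_n)\in[0,1]^n:\max_{i,j}|x_i-x_j|\ge c_\varepsilon\}$ is finite-time robustly reachable from $[0,1]^n$ under control protocol (C6).
   Context: Fix $n\ge3$, $\mathcal V=\{1,\dots,n\}$, confidence thresholds $r_i\in(0,1]$, belief factors $\omega_i\in(0,1)$, $\eta>0$. States $x(t)\in[0,1]^n$. Neighbor set $\mathcal N_i(t)=\{j:|x_j(t)-x_i(t)|\le r_i\}$ (contains $i$), $\Pi_{[0,1]}(y)=\min\{1,\max\{0,y\}\}$, $x_{\rm ave}(t)=\frac1n\sum_ix_i(t)$. Control protocol (C6): $x_i(t+1)=\Pi_{[0,1]}\big(\omega_ix_{\rm ave}(t)+\frac{1-\omega_i}{|\mathcal N_i(t)|}[x_i(t)+\sum_{j\in\mathcal N_i(t)\setminus\{i\}}(x_j(t)+u_{ji}(t)+b_{ji}(t))]\big)$, where for $j\in\mathcal N_i(t)\setminus\{i\}$: $\delta_i(t)\in(0,\eta)$ is a chosen parameter, $u_{ji}(t)\in[-\eta+\delta_i(t),\eta-\delta_i(t)]$ a chosen control input, $b_{ji}(t)\in[-\delta_i(t),\delta_i(t)]$ an arbitrary uncertainty; the choices may depend on $x(0),\dots,x(t)$. A set $S\subseteq[0,1]^n$ is finite-time robustly reachable from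 $[0,1]^n$ under the protocol if there exist constants $T>0$ and $\varepsilon'\in(0,\eta)$ such that for every $x(0)\in[0,1]^n$, either $x(0)\in S$, or one can choose $\delta_i(t)\in[\varepsilon',\eta)$ and $u_{ji}(t)\in[-\eta+\delta_i(t),\eta-\delta_i(t)]$ ($0\le t<T$, $i\in\mathcal V$, $j\in\mathcal N_i(t)\setminus\{i\}$) guaranteeing that for arbitrary $b_{ji}(t)\in[-\delta_i(t),\delta_i(t)]$ there is $t\in[1,T]$ with $x(t)\in S$. *)

theory Defs
  imports Complex_Main
begin

text \<open>Agents are indexed by 0..<n (the paper uses 1..n). A state is a function
  nat => real, only the values at indices < n matter.\<close>

definition proj01 :: "real \<Rightarrow> real" where
  "proj01 y = min 1 (max 0 y)"

definition x_ave :: "nat \<Rightarrow> (nat \<Rightarrow> real) \<Rightarrow> real" where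
  "x_ave n x = (\<Sum>i<n. x i) / real n"

definition nbr :: "nat \<Rightarrow> (nat \<Rightarrow> real) \<Rightarrow> (nat \<Rightarrow> real) \<Rightarrow> nat \<Rightarrow> nat set" where
  "nbr n r x i = {j. j < n \<and> \<bar>x j - x i\<bar> \<le> r i}"

text \<open>One step of protocol (C6). u j i = u_ji(t), b j i = b_ji(t).\<close>
definition step_C6 :: "nat \<Rightarrow> (nat \<Rightarrow> real) \<Rightarrow> (nat \<Rightarrow> real) \<Rightarrow> (nat \<Rightarrow> real)
    \<Rightarrow> (nat \<Rightarrow> nat \<Rightarrow> real) \<Rightarrow> (nat \<Rightarrow> nat \<Rightarrow> real) \<Rightarrow> (nat \<Rightarrow> real)" where
  "step_C6 n r \<omega> x u b = (\<lambda>i. proj01 (\<omega> i * x_ave n x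
      + (1 - \<omega> i) / real (card (nbr n r x i))
        * (x i + (\<Sum>j\<in>nbr n r x i - {i}. x j + u j i + b j i))))"

text \<open>History [x(0),...,x(t)] generated by a controller strategy (D, U), which maps
  the time and the history so far to delta_i(t) (D t h i) and u_ji(t) (U t h j i),
  and an uncertainty sequence B (B t j i = b_ji(t)).\<close>
primrec hist_C6 :: "nat \<Rightarrow> (nat \<Rightarrow> real) \<Rightarrow> (nat \<Rightarrow> real) \<Rightarrow> (nat \<Rightarrow> real)
    \<Rightarrow> (nat \<Rightarrow> (nat \<Rightarrow> real) list \<Rightarrow> nat \<Rightarrow> real)
    \<Rightarrow> (nat \<Rightarrow> (nat \<Rightarrow> real) list \<Rightarrow> nat \<Rightarrow> nat \<Rightarrow> real)
    \<Rightarrow> (nat \<Rightarrow> nat \<Rightarrow> nat \<Rightarrow> real) \<Rightarrow> nat \<Rightarrow> (nat \<Rightarrow> real) list" where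
  "hist_C6 n r \<omega> x0 D U B 0 = [x0]"
| "hist_C6 n r \<omega> x0 D U B (Suc t) =
     (let h = hist_C6 n r \<omega> x0 D U B t
      in h @ [step_C6 n r \<omega> (last h) (U t h) (B t)])"

definition traj_C6 where
  "traj_C6 n r \<omega> x0 D U B t = last (hist_C6 n r \<omega> x0 D U B t)"

definition cube :: "nat \<Rightarrow> (nat \<Rightarrow> real) set" where
  "cube n = {x. \<forall>i<n. 0 \<le> x i \<and> x i \<le> 1}"

definition ft_robustly_reachable ::
  "nat \<Rightarrow> (nat \<Rightarrow> real) \<Rightarrow> (nat \<Rightarrow> real) \<Rightarrow> real \<Rightarrow> (nat \<Rightarrow> real) set \<Rightarrow> bool" where
  "ft_robustly_reachable n r \<omega> \<eta> S \<longleftrightarrow>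
    (\<exists>T::nat. T > 0 \<and> (\<exists>\<epsilon>'. 0 < \<epsilon>' \<and> \<epsilon>' < \<eta> \<and>
      (\<forall>x0 \<in> cube n. x0 \<in> S \<or>
        (\<exists>D U.
           (\<forall>t h i. i < n \<longrightarrow> \<epsilon>' \<le> D t h i \<and> D t h i < \<eta>) \<and>
           (\<forall>t h i j. i < n \<longrightarrow> j < n \<longrightarrow> \<bar>U t h j i\<bar> \<le> \<eta> - D t h i) \<and>
           (\<forall>B. (\<forall>t<T. \<forall>i<n. \<forall>j\<in>nbr n r (traj_C6 n r \<omega> x0 D U B t) i - {i}.
                     \<bar>B t j i\<bar> \<le> D t (hist_C6 n r \<omega> x0 D U B t) i)
                \<longrightarrow> (\<exists>t\<in>{1..T}. traj_C6 n r \<omega> x0 D U B t \<in> S))))))"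

definition a_coef :: "nat \<Rightarrow> (nat \<Rightarrow> real) \<Rightarrow> real \<Rightarrow> nat \<Rightarrow> nat \<Rightarrow> real" where
  "a_coef n \<omega> \<eta> i j = real (n - 1) * (2 - \<omega> i - \<omega> j) * \<eta> / real n"

definition E_set :: "nat \<Rightarrow> real \<Rightarrow> (nat \<Rightarrow> real) set" where
  "E_set n c = {x \<in> cube n. Max {\<bar>x i - x j\<bar> | i j. i < n \<and> j < n} \<ge> c}"

end

theory Submission
  imports Defs
begin

text \<open>The controller keeps the uncertainty level \<open>\<delta>\<close> fixed and acts in three phases.
  First all inputs are zero: every agent moves towards the overall average \<open>x_ave\<close> with weight
  at least \<open>min \<omega>\<close>, so the spread of the states contracts geometrically up to \<open>O(\<delta>)\<close>
  until all agents are mutual neighbours. At such a consensus a common input \<open>v\<close> moves agent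
  \<open>i\<close> by \<open>control_gain n \<omega> i * v\<close> up to an error \<open>control_gain n \<omega> i * \<delta>\<close>, so in the second
  phase the agents jointly steer their average, keeping consensus, into a window around a
  target \<open>\<tau>\<close>. In the last step \<open>i0\<close> receives the largest admissible input \<open>\<eta> - \<delta>\<close> and
  \<open>j0\<close> the smallest, which separates them by \<open>a_coef n \<omega> \<eta> i0 j0 - O(\<delta>)\<close>; the window for
  \<open>\<tau>\<close> is chosen so that the projection onto \<open>[0, 1]\<close> does not destroy this separation.\<close>

lemma traj_C6_0: "traj_C6 n r \<omega> x0 D U B 0 = x0"
  by (simp add: traj_C6_def)

lemma traj_C6_Suc:
  "traj_C6 n r \<omega> x0 D U B (Suc t) =
   step_C6 n r \<omega> (traj_C6 n r \<omega> x0 D U B t) (U t (hist_C6 n r \<omega> x0 D U B t)) (B t)"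
  by (simp add: traj_C6_def Let_def)

lemma proj01_mono: "y \<le> w \<Longrightarrow> proj01 y \<le> proj01 w"
  by (auto simp: proj01_def)

lemma proj01_le_add: "y \<le> w \<Longrightarrow> proj01 w \<le> proj01 y + (w - y)"
  by (auto simp: proj01_def)

lemma proj01_ge_self: "y \<le> 1 \<Longrightarrow> y \<le> proj01 y"
  by (auto simp: proj01_def)

lemma proj01_le_self: "0 \<le> y \<Longrightarrow> proj01 y \<le> y"
  by (auto simp: proj01_def)

lemma proj01_diff_ge:
  "c \<le> 1 \<Longrightarrow> c \<le> y \<Longrightarrow> c \<le> 1 - w \<Longrightarrow> c \<le> y - w \<Longrightarrow> c \<le> proj01 y - proj01 w"
  by (auto simp: proj01_def)

lemma step_C6_in_cube: "step_C6 n r \<omega> x u b \<in> cube n"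
  by (simp add: step_C6_def cube_def proj01_def)

definition spread_le :: "nat \<Rightarrow> (nat \<Rightarrow> real) \<Rightarrow> real \<Rightarrow> bool" where
  "spread_le n x s \<longleftrightarrow> (\<exists>l. \<forall>k<n. l \<le> x k \<and> x k \<le> l + s)"

lemma spread_le_mono: "spread_le n x s \<Longrightarrow> s \<le> s' \<Longrightarrow> spread_le n x s'"
  unfolding spread_le_def by (meson add_left_mono order_trans)

lemma spread_le_dist:
  assumes "spread_le n x s" "i < n" "j < n"
  shows "\<bar>x j - x i\<bar> \<le> s"
proof -
  obtain l where "\<forall>k<n. l \<le> x k \<and> x k \<le> l + s"
    using assms(1) by (auto simp: spread_le_def)
  then have "l \<le> x i" "x i \<le> l + s" "l \<le> x j" "x j \<le> l + s"
    using assms(2,3) by auto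
  then show ?thesis
    by linarith
qed

lemma spread_le_cube: "x \<in> cube n \<Longrightarrow> spread_le n x 1"
  unfolding spread_le_def cube_def by (rule exI[of _ 0]) simp

lemma nbr_eq_all: "spread_le n x (r i) \<Longrightarrow> i < n \<Longrightarrow> nbr n r x i = {..<n}"
  by (auto simp: nbr_def dest: spread_le_dist)

lemma E_setI:
  assumes "x \<in> cube n" "i < n" "j < n" "c \<le> x i - x j"
  shows "x \<in> E_set n c"
proof -
  have "finite {\<bar>x k - x l\<bar> | k l. k < n \<and> l < n}"
    by (rule finite_subset[of _ "(\<lambda>(k, l). \<bar>x k - x l\<bar>) ` ({..<n} \<times> {..<n})"]) auto
  then have "\<bar>x i - x j\<bar> \<le> Max {\<bar>x k - x l\<bar> | k l. k < n \<and> l < n}"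
    using assms(2,3) by (intro Max_ge) auto
  then show ?thesis
    using assms(1,4) by (simp add: E_set_def)
qed

lemma mean_bounds:
  fixes f :: "'a \<Rightarrow> real"
  assumes "finite A" "A \<noteq> {}" "\<forall>k\<in>A. lo \<le> f k \<and> f k \<le> hi"
  shows "lo \<le> sum f A / card A" "sum f A / card A \<le> hi"
proof -
  have card: "0 < real (card A)"
    using assms(1,2) by (simp add: card_gt_0_iff)
  have "real (card A) * lo \<le> sum f A" "sum f A \<le> real (card A) * hi"
    using sum_mono[of A "\<lambda>_. lo" f] sum_mono[of A f "\<lambda>_. hi"] assms(3) by auto
  then show "lo \<le> sum f A / card A" "sum f A / card A \<le> hi"
    using card by (simp_all add: field_simps)
qed

lemma x_ave_bounds:
  assumes "0 < n" "\<forall>k<n. lo \<le> x k \<and> x k \<le> hi"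
  shows "lo \<le> x_ave n x" "x_ave n x \<le> hi"
  using mean_bounds[of "{..<n}" lo x hi] assms by (auto simp: x_ave_def)

lemma x_ave_cube: "0 < n \<Longrightarrow> x \<in> cube n \<Longrightarrow> 0 \<le> x_ave n x \<and> x_ave n x \<le> 1"
  using x_ave_bounds[of n 0 x 1] by (auto simp: cube_def)

text \<open>At consensus, a common input \<open>v\<close> sent to agent \<open>i\<close> by all other agents shifts its
  next state by \<open>control_gain n \<omega> i * v\<close>.\<close>
definition control_gain :: "nat \<Rightarrow> (nat \<Rightarrow> real) \<Rightarrow> nat \<Rightarrow> real" where
  "control_gain n \<omega> i = real (n - 1) * (1 - \<omega> i) / real n"

lemma a_coef_eq_control_gain: "a_coef n \<omega> \<eta> i j = (control_gain n \<omega> i + control_gain n \<omega> j) * \<eta>"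
  by (simp add: a_coef_def control_gain_def add_divide_distrib[symmetric] algebra_simps)

lemma control_gain_pos: "2 \<le> n \<Longrightarrow> \<omega> i < 1 \<Longrightarrow> 0 < control_gain n \<omega> i"
  by (simp add: control_gain_def)

lemma control_gain_less_1: "0 < \<omega> i \<Longrightarrow> \<omega> i \<le> 1 \<Longrightarrow> control_gain n \<omega> i < 1"
proof (cases "n = 0")
  case False
  assume "0 < \<omega> i" "\<omega> i \<le> 1"
  then have "real (n - 1) * (1 - \<omega> i) \<le> real (n - 1)"
    by (simp add: mult_left_le)
  also have "\<dots> < real n"
    using False by simp
  finally show ?thesis
    using False by (simp add: control_gain_def)
qed (simp add: control_gain_def)

lemma step_C6_eq:
  assumes "i < n" "0 \<le> r i"
  shows "step_C6 n r \<omega> x u b i = proj01 (\<omega> i * x_ave n x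
      + (1 - \<omega> i) * ((\<Sum>j\<in>nbr n r x i. x j) / card (nbr n r x i))
      + (1 - \<omega> i) / card (nbr n r x i) * (\<Sum>j\<in>nbr n r x i - {i}. u j i + b j i))"
proof -
  have "i \<in> nbr n r x i" "finite (nbr n r x i)"
    using assms by (auto simp: nbr_def)
  then have "(\<Sum>j\<in>nbr n r x i. x j) = x i + (\<Sum>j\<in>nbr n r x i - {i}. x j)"
    by (simp add: sum.remove)
  moreover have "(\<Sum>j\<in>nbr n r x i - {i}. x j + u j i + b j i)
      = (\<Sum>j\<in>nbr n r x i - {i}. x j) + (\<Sum>j\<in>nbr n r x i - {i}. u j i + b j i)"
    by (simp add: sum.distrib add.assoc)
  ultimately show ?thesis
    unfolding step_C6_def by (simp add: algebra_simps add_divide_distrib diff_divide_distrib)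
qed

lemma step_C6_consensus_bounds:
  fixes v :: "nat \<Rightarrow> real"
  assumes i: "i < n" and consensus: "spread_le n x (r i)"
    and noise: "\<forall>j\<in>nbr n r x i - {i}. \<bar>b j i\<bar> \<le> \<delta>" and "\<omega> i \<le> 1"
  shows "proj01 (x_ave n x + control_gain n \<omega> i * (v i - \<delta>)) \<le> step_C6 n r \<omega> x (\<lambda>j i. v i) b i"
    and "step_C6 n r \<omega> x (\<lambda>j i. v i) b i \<le> proj01 (x_ave n x + control_gain n \<omega> i * (v i + \<delta>))"
proof -
  have N: "nbr n r x i = {..<n}"
    using nbr_eq_all[of n x r i] consensus i by simp
  have "0 \<le> r i"
    using spread_le_dist[OF consensus i i] by simp
  have card: "card ({..<n} - {i}) = n - 1"
    using i by simp
  define e where "e = (\<Sum>j\<in>{..<n} - {i}. b j i)"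
  have "\<bar>e\<bar> \<le> (\<Sum>j\<in>{..<n} - {i}. \<bar>b j i\<bar>)"
    unfolding e_def by (rule sum_abs)
  also have "\<dots> \<le> real (n - 1) * \<delta>"
    using sum_bounded_above[of "{..<n} - {i}" "\<lambda>j. \<bar>b j i\<bar>" \<delta>] noise card N by simp
  finally have e: "\<bar>e\<bar> \<le> real (n - 1) * \<delta>" .
  \<comment> \<open>with full neighbourhoods both averages in (C6) are \<open>x_ave n x\<close>\<close>
  have "step_C6 n r \<omega> x (\<lambda>j i. v i) b i
      = proj01 (\<omega> i * x_ave n x + (1 - \<omega> i) * x_ave n x + (1 - \<omega> i) / n * (real (n - 1) * v i + e))"
    using step_C6_eq[where u = "\<lambda>j i. v i" and r = r and i = i and n = n, OF i \<open>0 \<le> r i\<close>] N card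
    by (simp add: x_ave_def sum.distrib e_def)
  also have "\<dots> = proj01 (x_ave n x + control_gain n \<omega> i * v i + (1 - \<omega> i) / n * e)"
    by (simp add: control_gain_def algebra_simps)
  finally have step: "step_C6 n r \<omega> x (\<lambda>j i. v i) b i
      = proj01 (x_ave n x + control_gain n \<omega> i * v i + (1 - \<omega> i) / n * e)" .
  have "\<bar>(1 - \<omega> i) / n * e\<bar> = (1 - \<omega> i) / n * \<bar>e\<bar>"
    using \<open>\<omega> i \<le> 1\<close> by (simp add: abs_mult)
  also have "\<dots> \<le> (1 - \<omega> i) / n * (real (n - 1) * \<delta>)"
    using e \<open>\<omega> i \<le> 1\<close> by (intro mult_left_mono) auto
  also have "\<dots> = control_gain n \<omega> i * \<delta>"
    by (simp add: control_gain_def)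
  finally have "\<bar>(1 - \<omega> i) / n * e\<bar> \<le> control_gain n \<omega> i * \<delta>" .
  then have "control_gain n \<omega> i * (v i - \<delta>) \<le> control_gain n \<omega> i * v i + (1 - \<omega> i) / n * e"
    and "control_gain n \<omega> i * v i + (1 - \<omega> i) / n * e \<le> control_gain n \<omega> i * (v i + \<delta>)"
    unfolding right_diff_distrib distrib_left by linarith+
  then show "proj01 (x_ave n x + control_gain n \<omega> i * (v i - \<delta>)) \<le> step_C6 n r \<omega> x (\<lambda>j i. v i) b i"
    and "step_C6 n r \<omega> x (\<lambda>j i. v i) b i \<le> proj01 (x_ave n x + control_gain n \<omega> i * (v i + \<delta>))"
    unfolding step by (simp_all add: proj01_mono add.assoc)
qed

lemma step_C6_free_bounds:
  assumes i: "i < n" "0 \<le> r i" and band: "\<forall>k<n. lo \<le> x k \<and> x k \<le> lo + s"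
    and noise: "\<forall>j\<in>nbr n r x i - {i}. \<bar>b j i\<bar> \<le> \<delta>" and "0 \<le> \<delta>"
    and \<omega>: "0 \<le> wm" "wm \<le> \<omega> i" "\<omega> i \<le> 1"
  shows "\<exists>y. wm * x_ave n x + (1 - wm) * lo - \<delta> \<le> y
    \<and> y \<le> wm * x_ave n x + (1 - wm) * lo + (1 - wm) * s + \<delta>
    \<and> step_C6 n r \<omega> x (\<lambda>j i. 0) b i = proj01 y"
proof -
  let ?N = "nbr n r x i"
  have N: "finite ?N" "i \<in> ?N" "?N \<subseteq> {..<n}"
    using i by (auto simp: nbr_def)
  define m where "m = (\<Sum>j\<in>?N. x j) / card ?N"
  have m: "lo \<le> m" "m \<le> lo + s"
    using mean_bounds[of ?N lo x "lo + s"] N band unfolding m_def by auto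
  have a: "lo \<le> x_ave n x" "x_ave n x \<le> lo + s"
    using x_ave_bounds[of n lo x "lo + s"] band i by auto
  define e where "e = (1 - \<omega> i) / card ?N * (\<Sum>j\<in>?N - {i}. b j i)"
  have "\<bar>\<Sum>j\<in>?N - {i}. b j i\<bar> \<le> (\<Sum>j\<in>?N - {i}. \<bar>b j i\<bar>)"
    by (rule sum_abs)
  also have "\<dots> \<le> real (card (?N - {i})) * \<delta>"
    using sum_bounded_above[of "?N - {i}" "\<lambda>j. \<bar>b j i\<bar>" \<delta>] noise by simp
  also have "\<dots> \<le> real (card ?N) * \<delta>"
    using N \<open>0 \<le> \<delta>\<close> by (intro mult_right_mono) (simp_all add: card_Diff_subset)
  finally have sum_b: "\<bar>\<Sum>j\<in>?N - {i}. b j i\<bar> / card ?N \<le> \<delta>"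
    using N \<open>0 \<le> \<delta>\<close> by (simp add: card_gt_0_iff divide_le_eq mult.commute)
  have "\<bar>e\<bar> = (1 - \<omega> i) * (\<bar>\<Sum>j\<in>?N - {i}. b j i\<bar> / card ?N)"
    using \<omega> by (simp add: e_def abs_mult)
  also have "\<dots> \<le> (1 - \<omega> i) * \<delta>"
    using sum_b \<omega> by (intro mult_left_mono) auto
  also have "\<dots> \<le> \<delta>"
    using \<omega> \<open>0 \<le> \<delta>\<close> by (simp add: mult_left_le_one_le)
  finally have e: "\<bar>e\<bar> \<le> \<delta>" .
  have step: "step_C6 n r \<omega> x (\<lambda>j i. 0) b i = proj01 (\<omega> i * x_ave n x + (1 - \<omega> i) * m + e)"
    using step_C6_eq[where u = "\<lambda>j i. 0" and r = r and i = i and n = n, OF i] unfolding m_def e_def by simp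
  have "0 \<le> (\<omega> i - wm) * (x_ave n x - lo)" "(\<omega> i - wm) * (x_ave n x - lo) \<le> (\<omega> i - wm) * s"
    "0 \<le> (1 - \<omega> i) * (m - lo)" "(1 - \<omega> i) * (m - lo) \<le> (1 - \<omega> i) * s"
    using a m \<omega> by (auto intro: mult_left_mono)
  moreover have "\<omega> i * x_ave n x + (1 - \<omega> i) * m
      = wm * x_ave n x + (1 - wm) * lo + (\<omega> i - wm) * (x_ave n x - lo) + (1 - \<omega> i) * (m - lo)"
    and "(\<omega> i - wm) * s + (1 - \<omega> i) * s = (1 - wm) * s"
    by (simp_all add: algebra_simps)
  ultimately have "wm * x_ave n x + (1 - wm) * lo - \<delta> \<le> \<omega> i * x_ave n x + (1 - \<omega> i) * m + e"
    and "\<omega> i * x_ave n x + (1 - \<omega> i) * m + e \<le> wm * x_ave n x + (1 - wm) * lo + (1 - wm) * s + \<delta>"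
    using e unfolding abs_le_iff by linarith+
  with step show ?thesis
    by blast
qed

lemma step_C6_spread_contract:
  assumes "spread_le n x s" and "\<forall>i<n. 0 \<le> r i \<and> wm \<le> \<omega> i \<and> \<omega> i \<le> 1"
    and "0 \<le> wm" "0 \<le> \<delta>" and "\<forall>i<n. \<forall>j\<in>nbr n r x i - {i}. \<bar>b j i\<bar> \<le> \<delta>"
  shows "spread_le n (step_C6 n r \<omega> x (\<lambda>j i. 0) b) ((1 - wm) * s + 2 * \<delta>)"
proof -
  obtain lo where band: "\<forall>k<n. lo \<le> x k \<and> x k \<le> lo + s"
    using assms(1) by (auto simp: spread_le_def)
  define L where "L = wm * x_ave n x + (1 - wm) * lo - \<delta>"
  have "proj01 L \<le> step_C6 n r \<omega> x (\<lambda>j i. 0) b i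
      \<and> step_C6 n r \<omega> x (\<lambda>j i. 0) b i \<le> proj01 L + ((1 - wm) * s + 2 * \<delta>)" if "i < n" for i
  proof -
    have "0 \<le> r i" "wm \<le> \<omega> i" "\<omega> i \<le> 1" "\<forall>j\<in>nbr n r x i - {i}. \<bar>b j i\<bar> \<le> \<delta>"
      using assms(2,5) that by auto
    from step_C6_free_bounds[where x = x and b = b and r = r and \<omega> = \<omega> and i = i, OF that this(1) band this(4) assms(4,3) this(2,3)]
    obtain y where y: "L \<le> y" "y \<le> wm * x_ave n x + (1 - wm) * lo + (1 - wm) * s + \<delta>"
      and step: "step_C6 n r \<omega> x (\<lambda>j i. 0) b i = proj01 y"
      unfolding L_def by blast
    show ?thesis
      using proj01_mono[OF y(1)] proj01_le_add[OF y(1)] y(2) unfolding step L_def by linarith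
  qed
  then show ?thesis
    unfolding spread_le_def by blast
qed

lemma spread_le_free_run:
  assumes agents: "\<forall>i<n. 0 \<le> r i \<and> wm \<le> \<omega> i \<and> \<omega> i \<le> 1"
    and "0 \<le> wm" "0 \<le> \<delta>" "0 \<le> \<sigma>" "2 * \<delta> \<le> wm * \<sigma>"
    and start: "X 0 \<in> cube n"
    and run: "\<And>t. t < T \<Longrightarrow> X (Suc t) = step_C6 n r \<omega> (X t) (\<lambda>j i. 0) (B t)"
    and noise: "\<And>t. t < T \<Longrightarrow> \<forall>i<n. \<forall>j\<in>nbr n r (X t) i - {i}. \<bar>B t j i\<bar> \<le> \<delta>"
  shows "t \<le> T \<Longrightarrow> spread_le n (X t) ((1 - wm) ^ t + \<sigma>)"
proof (induction t)
  case 0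
  show ?case
    using spread_le_cube[OF start] \<open>0 \<le> \<sigma>\<close> by (simp add: spread_le_mono)
next
  case (Suc t)
  then have t: "t < T"
    by simp
  have "spread_le n (X (Suc t)) ((1 - wm) * ((1 - wm) ^ t + \<sigma>) + 2 * \<delta>)"
    unfolding run[OF t]
    using Suc t agents assms(2,3) noise[OF t] by (intro step_C6_spread_contract) auto
  moreover have "(1 - wm) * ((1 - wm) ^ t + \<sigma>) + 2 * \<delta> \<le> (1 - wm) ^ Suc t + \<sigma>"
    using \<open>2 * \<delta> \<le> wm * \<sigma>\<close> by (simp add: algebra_simps)
  ultimately show ?case
    by (rule spread_le_mono)
qed

definition steer :: "real \<Rightarrow> real \<Rightarrow> real \<Rightarrow> real" where
  "steer D \<tau> z = max (- D) (min D (\<tau> - z))"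

lemma steer_abs_le: "0 \<le> D \<Longrightarrow> \<bar>steer D \<tau> z\<bar> \<le> D"
  by (auto simp: steer_def)

lemma steer_in_unit:
  "0 \<le> z \<Longrightarrow> z \<le> 1 \<Longrightarrow> 0 \<le> \<tau> \<Longrightarrow> \<tau> \<le> 1 \<Longrightarrow> 0 \<le> D
    \<Longrightarrow> 0 \<le> z + steer D \<tau> z \<and> z + steer D \<tau> z \<le> 1"
  by (auto simp: steer_def)

lemma steer_progress:
  assumes "0 < \<delta>" "2 * \<delta> \<le> D" "\<bar>z - \<tau>\<bar> \<le> max \<delta> (1 - K * D / 2)"
  shows "\<bar>z + steer D \<tau> z - \<tau>\<bar> + \<delta> \<le> max \<delta> (1 - (K + 1) * D / 2)"
proof (cases "\<bar>\<tau> - z\<bar> \<le> D")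
  case True
  then have "steer D \<tau> z = \<tau> - z"
    by (auto simp: steer_def)
  then show ?thesis
    by simp
next
  case False
  then have "\<bar>z + steer D \<tau> z - \<tau>\<bar> = \<bar>z - \<tau>\<bar> - D"
    using assms by (auto simp: steer_def abs_if max_def min_def split: if_splits)
  moreover have "\<bar>z - \<tau>\<bar> \<le> 1 - K * D / 2"
    using False assms by (auto simp: max_def split: if_splits)
  ultimately show ?thesis
    using assms by (simp add: algebra_simps add_divide_distrib)
qed

lemma step_C6_steer:
  assumes consensus: "spread_le n x \<rho>"
    and agents: "\<forall>i<n. \<rho> \<le> r i \<and> \<omega> i \<le> 1 \<and> 0 < control_gain n \<omega> i \<and> control_gain n \<omega> i \<le> 1"
    and noise: "\<forall>i<n. \<forall>j\<in>nbr n r x i - {i}. \<bar>b j i\<bar> \<le> \<delta>" and "0 \<le> \<delta>"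
    and target: "0 \<le> x_ave n x + \<Delta>" "x_ave n x + \<Delta> \<le> 1"
  shows "\<forall>i<n. \<bar>step_C6 n r \<omega> x (\<lambda>j i. \<Delta> / control_gain n \<omega> i) b i - (x_ave n x + \<Delta>)\<bar> \<le> \<delta>"
proof (intro allI impI)
  fix i assume i: "i < n"
  let ?g = "control_gain n \<omega> i"
  have g: "0 < ?g" "?g * \<delta> \<le> \<delta>"
    using agents i \<open>0 \<le> \<delta>\<close> by (auto simp: mult_left_le_one_le)
  have "spread_le n x (r i)"
    using consensus agents i spread_le_mono by blast
  moreover have "\<forall>j\<in>nbr n r x i - {i}. \<bar>b j i\<bar> \<le> \<delta>" "\<omega> i \<le> 1"
    using noise agents i by auto
  ultimately have bounds:
    "proj01 (x_ave n x + ?g * (\<Delta> / ?g - \<delta>)) \<le> step_C6 n r \<omega> x (\<lambda>j i. \<Delta> / control_gain n \<omega> i) b i"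
    "step_C6 n r \<omega> x (\<lambda>j i. \<Delta> / control_gain n \<omega> i) b i \<le> proj01 (x_ave n x + ?g * (\<Delta> / ?g + \<delta>))"
    using step_C6_consensus_bounds[where v = "\<lambda>i. \<Delta> / control_gain n \<omega> i" and r = r and i = i
        and \<omega> = \<omega> and b = b and \<delta> = \<delta>, OF i] by blast+
  have "?g * (\<Delta> / ?g - \<delta>) = \<Delta> - ?g * \<delta>" "?g * (\<Delta> / ?g + \<delta>) = \<Delta> + ?g * \<delta>"
    using g by (simp_all add: algebra_simps)
  note bounds = bounds[unfolded this]
  have "0 \<le> ?g * \<delta>"
    using g \<open>0 \<le> \<delta>\<close> by simp
  then have "x_ave n x + (\<Delta> - ?g * \<delta>) \<le> proj01 (x_ave n x + (\<Delta> - ?g * \<delta>))"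
    "proj01 (x_ave n x + (\<Delta> + ?g * \<delta>)) \<le> x_ave n x + (\<Delta> + ?g * \<delta>)"
    using target by (intro proj01_ge_self proj01_le_self; linarith)+
  with bounds have "x_ave n x + \<Delta> - ?g * \<delta> \<le> step_C6 n r \<omega> x (\<lambda>j i. \<Delta> / control_gain n \<omega> i) b i"
    "step_C6 n r \<omega> x (\<lambda>j i. \<Delta> / control_gain n \<omega> i) b i \<le> x_ave n x + \<Delta> + ?g * \<delta>"
    by linarith+
  then show "\<bar>step_C6 n r \<omega> x (\<lambda>j i. \<Delta> / control_gain n \<omega> i) b i - (x_ave n x + \<Delta>)\<bar> \<le> \<delta>"
    using g by linarith
qed

lemma steering_run:
  assumes agents: "\<forall>i<n. \<rho> \<le> r i \<and> \<omega> i \<le> 1 \<and> 0 < control_gain n \<omega> i \<and> control_gain n \<omega> i \<le> 1"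
    and "0 < n" "0 < \<delta>" "2 * \<delta> \<le> \<rho>" "2 * \<delta> \<le> D" "0 \<le> \<tau>" "\<tau> \<le> 1"
    and start: "X 0 \<in> cube n" "spread_le n (X 0) \<rho>"
    and run: "\<And>t. t < K \<Longrightarrow> X (Suc t) =
      step_C6 n r \<omega> (X t) (\<lambda>j i. steer D \<tau> (x_ave n (X t)) / control_gain n \<omega> i) (B t)"
    and noise: "\<And>t. t < K \<Longrightarrow> \<forall>i<n. \<forall>j\<in>nbr n r (X t) i - {i}. \<bar>B t j i\<bar> \<le> \<delta>"
  shows "k \<le> K \<Longrightarrow> spread_le n (X k) \<rho> \<and> \<bar>x_ave n (X k) - \<tau>\<bar> \<le> max \<delta> (1 - real k * D / 2)"
proof (induction k)
  case 0
  have "0 \<le> x_ave n (X 0) \<and> x_ave n (X 0) \<le> 1"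
    using x_ave_cube[OF \<open>0 < n\<close> start(1)] .
  then show ?case
    using start(2) \<open>0 \<le> \<tau>\<close> \<open>\<tau> \<le> 1\<close> by (auto simp: abs_le_iff)
next
  case (Suc k)
  then have k: "k < K"
    by simp
  have "X k \<in> cube n"
    using start(1) run[of "k - 1"] k by (cases k) (auto simp: step_C6_in_cube)
  define z where "z = x_ave n (X k)"
  define w where "w = z + steer D \<tau> z"
  have z: "0 \<le> z" "z \<le> 1"
    using x_ave_cube[OF \<open>0 < n\<close> \<open>X k \<in> cube n\<close>] by (simp_all add: z_def)
  have "0 \<le> D"
    using \<open>0 < \<delta>\<close> \<open>2 * \<delta> \<le> D\<close> by linarith
  then have w: "0 \<le> w" "w \<le> 1"
    using steer_in_unit[OF z \<open>0 \<le> \<tau>\<close> \<open>\<tau> \<le> 1\<close>] by (simp_all add: w_def)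
  have IH: "spread_le n (X k) \<rho>" "\<bar>z - \<tau>\<bar> \<le> max \<delta> (1 - real k * D / 2)"
    using Suc k by (simp_all add: z_def)
  have near: "\<forall>i<n. \<bar>X (Suc k) i - w\<bar> \<le> \<delta>"
    unfolding run[OF k] w_def z_def
    using IH(1) agents noise[OF k] \<open>0 < \<delta>\<close> w by (intro step_C6_steer) (auto simp: w_def z_def)
  then have band: "\<forall>i<n. w - \<delta> \<le> X (Suc k) i \<and> X (Suc k) i \<le> w - \<delta> + 2 * \<delta>"
    by (auto simp: abs_le_iff)
  then have "spread_le n (X (Suc k)) (2 * \<delta>)"
    unfolding spread_le_def by blast
  then have "spread_le n (X (Suc k)) \<rho>"
    using \<open>2 * \<delta> \<le> \<rho>\<close> by (rule spread_le_mono)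
  moreover have "\<forall>i<n. w - \<delta> \<le> X (Suc k) i \<and> X (Suc k) i \<le> w + \<delta>"
    using near by (auto simp: abs_le_iff)
  then have "\<bar>x_ave n (X (Suc k)) - w\<bar> \<le> \<delta>"
    using x_ave_bounds[OF \<open>0 < n\<close>, of "w - \<delta>" "X (Suc k)" "w + \<delta>"] by (simp add: abs_le_iff)
  moreover have "\<bar>w - \<tau>\<bar> + \<delta> \<le> max \<delta> (1 - (real k + 1) * D / 2)"
    unfolding w_def using steer_progress[OF \<open>0 < \<delta>\<close> \<open>2 * \<delta> \<le> D\<close> IH(2)] .
  moreover have "\<bar>x_ave n (X (Suc k)) - \<tau>\<bar> \<le> \<bar>x_ave n (X (Suc k)) - w\<bar> + \<bar>w - \<tau>\<bar>"
    by arith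
  ultimately show ?case
    by (simp add: add.commute)
qed

lemma step_C6_separates:
  assumes "i0 < n" "j0 < n" and consensus: "spread_le n x \<rho>"
    and "\<rho> \<le> r i0" "\<rho> \<le> r j0" "\<omega> i0 \<le> 1" "\<omega> j0 \<le> 1"
    and noise: "\<forall>i<n. \<forall>j\<in>nbr n r x i - {i}. \<bar>b j i\<bar> \<le> \<delta>"
    and "v i0 = p" "v j0 = - q"
    and "c \<le> 1" "c \<le> control_gain n \<omega> i0 * (p - \<delta>) + control_gain n \<omega> j0 * (q - \<delta>)"
    and "c - control_gain n \<omega> i0 * (p - \<delta>) \<le> x_ave n x"
    and "x_ave n x \<le> 1 - c + control_gain n \<omega> j0 * (q - \<delta>)"
  shows "step_C6 n r \<omega> x (\<lambda>j i. v i) b \<in> E_set n c"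
proof -
  let ?x' = "step_C6 n r \<omega> x (\<lambda>j i. v i) b"
  let ?y = "x_ave n x + control_gain n \<omega> i0 * (p - \<delta>)"
  let ?w = "x_ave n x - control_gain n \<omega> j0 * (q - \<delta>)"
  have "spread_le n x (r i0)" "spread_le n x (r j0)"
    using consensus assms(4,5) spread_le_mono by blast+
  then have "proj01 (x_ave n x + control_gain n \<omega> i0 * (v i0 - \<delta>)) \<le> ?x' i0"
    "?x' j0 \<le> proj01 (x_ave n x + control_gain n \<omega> j0 * (v j0 + \<delta>))"
    using step_C6_consensus_bounds[where v = v and r = r and \<omega> = \<omega> and b = b and \<delta> = \<delta>]
      assms(1,2,6,7) noise by blast+
  moreover have "x_ave n x + control_gain n \<omega> j0 * (v j0 + \<delta>) = ?w"
    using \<open>v j0 = - q\<close> by (simp add: algebra_simps)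
  ultimately have "proj01 ?y \<le> ?x' i0" "?x' j0 \<le> proj01 ?w"
    using \<open>v i0 = p\<close> by simp_all
  moreover have "c \<le> proj01 ?y - proj01 ?w"
    using assms(11-14) by (intro proj01_diff_ge) (simp_all add: algebra_simps)
  ultimately have "c \<le> ?x' i0 - ?x' j0"
    by linarith
  then show ?thesis
    by (rule E_setI[OF step_C6_in_cube assms(1,2)])
qed

locale three_phase_plan =
  fixes n :: nat and r \<omega> :: "nat \<Rightarrow> real" and \<eta> :: real
    and i0 j0 :: nat and \<rho> wm gm \<delta> \<tau> c :: real and T1 T2 :: nat
  assumes agents: "i0 < n" "j0 < n" "i0 \<noteq> j0"
    and radius: "0 < \<rho>" "\<forall>i<n. \<rho> \<le> r i"
    and belief: "0 < wm" "\<forall>i<n. wm \<le> \<omega> i \<and> \<omega> i < 1"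
    and gain: "0 < gm" "\<forall>i<n. gm \<le> control_gain n \<omega> i"
    and noise_level: "0 < \<delta>" "4 * \<delta> \<le> wm * \<rho>" "4 * \<delta> \<le> gm * \<eta>"
    and consensus_time: "(1 - wm) ^ T1 \<le> \<rho> / 2"
    and steering_time: "2 \<le> real T2 * (gm * (\<eta> - \<delta>))"
    and target: "0 \<le> \<tau>" "\<tau> \<le> 1"
      "c - control_gain n \<omega> i0 * (\<eta> - 2 * \<delta>) \<le> \<tau> - \<delta>"
      "\<tau> + \<delta> \<le> 1 - c + control_gain n \<omega> j0 * (\<eta> - 2 * \<delta>)"
    and separation: "c \<le> 1" "c \<le> (control_gain n \<omega> i0 + control_gain n \<omega> j0) * (\<eta> - 2 * \<delta>)"
begin

lemma control_gain_in_unit: "i < n \<Longrightarrow> 0 < control_gain n \<omega> i \<and> control_gain n \<omega> i \<le> 1"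
  using gain belief control_gain_less_1[of \<omega> i n] by fastforce

lemma noise_le_half_radius: "2 * \<delta> \<le> \<rho>"
proof -
  have "wm * \<rho> \<le> \<rho>"
    using belief agents(1) radius(1) by (intro mult_left_le_one_le) fastforce+
  then show ?thesis
    using noise_level by linarith
qed

lemma steer_step_bounds: "2 * \<delta> \<le> gm * (\<eta> - \<delta>)" "\<delta> < \<eta>"
proof -
  have "gm \<le> 1"
    using gain control_gain_in_unit agents(1) by fastforce
  then have "gm * \<delta> \<le> \<delta>"
    using noise_level(1) by (simp add: mult_left_le_one_le)
  then show budget: "2 * \<delta> \<le> gm * (\<eta> - \<delta>)"
    using noise_level unfolding right_diff_distrib by linarith
  show "\<delta> < \<eta>"
  proof (rule ccontr)
    assume "\<not> \<delta> < \<eta>"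
    then have "gm * (\<eta> - \<delta>) \<le> 0"
      using gain(1) by (simp add: mult_nonneg_nonpos)
    then show False
      using budget noise_level(1) by linarith
  qed
qed

definition policy :: "nat \<Rightarrow> (nat \<Rightarrow> real) \<Rightarrow> nat \<Rightarrow> real" where
  "policy t x i =
    (if t < T1 then 0
     else if t < T1 + T2 then steer (gm * (\<eta> - \<delta>)) \<tau> (x_ave n x) / control_gain n \<omega> i
     else if i = i0 then \<eta> - \<delta> else if i = j0 then - (\<eta> - \<delta>) else 0)"

lemma policy_abs_le: "i < n \<Longrightarrow> \<bar>policy t x i\<bar> \<le> \<eta> - \<delta>"
proof -
  assume i: "i < n"
  have "\<bar>steer (gm * (\<eta> - \<delta>)) \<tau> (x_ave n x)\<bar> \<le> gm * (\<eta> - \<delta>)"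
    using steer_step_bounds noise_level(1) gain(1) by (intro steer_abs_le) simp
  also have "\<dots> \<le> control_gain n \<omega> i * (\<eta> - \<delta>)"
    using gain i steer_step_bounds by (intro mult_right_mono) auto
  finally show ?thesis
    using control_gain_in_unit[OF i] steer_step_bounds
    by (auto simp: policy_def pos_divide_le_eq mult.commute)
qed

lemma run_reaches_E_set:
  assumes start: "X 0 \<in> cube n"
    and run: "\<And>t. t \<le> T1 + T2 \<Longrightarrow> X (Suc t) = step_C6 n r \<omega> (X t) (\<lambda>j i. policy t (X t) i) (B t)"
    and noise: "\<And>t. t \<le> T1 + T2 \<Longrightarrow> \<forall>i<n. \<forall>j\<in>nbr n r (X t) i - {i}. \<bar>B t j i\<bar> \<le> \<delta>"
  shows "X (Suc (T1 + T2)) \<in> E_set n c"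
proof -
  let ?D = "gm * (\<eta> - \<delta>)"
  let ?t = "T1 + T2"
  have cube: "X t \<in> cube n" if "t \<le> Suc ?t" for t
    using that start run by (cases t) (auto simp: step_C6_in_cube)
  have agents': "\<forall>i<n. 0 \<le> r i \<and> wm \<le> \<omega> i \<and> \<omega> i \<le> 1"
    "\<forall>i<n. \<rho> \<le> r i \<and> \<omega> i \<le> 1 \<and> 0 < control_gain n \<omega> i \<and> control_gain n \<omega> i \<le> 1"
    using radius belief control_gain_in_unit by (auto intro: order_trans less_imp_le)
  have "\<And>t. t < T1 \<Longrightarrow> X (Suc t) = step_C6 n r \<omega> (X t) (\<lambda>j i. 0) (B t)"
    "\<And>t. t < T1 \<Longrightarrow> \<forall>i<n. \<forall>j\<in>nbr n r (X t) i - {i}. \<bar>B t j i\<bar> \<le> \<delta>"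
    using run noise by (simp_all add: policy_def)
  from spread_le_free_run[where \<sigma> = "\<rho> / 2" and X = X and B = B and T = T1 and r = r and \<omega> = \<omega>,
      OF agents'(1) _ _ _ _ start this order_refl]
  have "spread_le n (X T1) ((1 - wm) ^ T1 + \<rho> / 2)"
    using belief(1) noise_level radius(1) by simp
  then have consensus: "spread_le n (X T1) \<rho>"
    using consensus_time by (auto intro: spread_le_mono)
  have "\<And>k. k < T2 \<Longrightarrow> X (T1 + Suc k) = step_C6 n r \<omega> (X (T1 + k))
      (\<lambda>j i. steer ?D \<tau> (x_ave n (X (T1 + k))) / control_gain n \<omega> i) (B (T1 + k))"
    "\<And>k. k < T2 \<Longrightarrow> \<forall>i<n. \<forall>j\<in>nbr n r (X (T1 + k)) i - {i}. \<bar>B (T1 + k) j i\<bar> \<le> \<delta>"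
    using run noise by (simp_all add: policy_def)
  moreover have "X (T1 + 0) \<in> cube n" "spread_le n (X (T1 + 0)) \<rho>"
    using cube consensus by simp_all
  ultimately have "spread_le n (X (T1 + T2)) \<rho> \<and>
      \<bar>x_ave n (X (T1 + T2)) - \<tau>\<bar> \<le> max \<delta> (1 - real T2 * ?D / 2)"
    using steering_run[where X = "\<lambda>k. X (T1 + k)" and B = "\<lambda>k. B (T1 + k)" and K = T2,
        OF agents'(2) _ _ _ steer_step_bounds(1) target(1,2)]
    using agents(1) noise_level radius noise_le_half_radius by simp
  moreover have "1 - real T2 * ?D / 2 \<le> 0"
    using steering_time by simp
  ultimately have steered: "spread_le n (X ?t) \<rho>" "\<bar>x_ave n (X ?t) - \<tau>\<bar> \<le> \<delta>"
    using noise_level(1) by auto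
  have policy_final: "policy ?t (X ?t) i0 = \<eta> - \<delta>" "policy ?t (X ?t) j0 = - (\<eta> - \<delta>)"
    using agents(3) by (simp_all add: policy_def)
  have window: "c \<le> control_gain n \<omega> i0 * (\<eta> - \<delta> - \<delta>) + control_gain n \<omega> j0 * (\<eta> - \<delta> - \<delta>)"
    "c - control_gain n \<omega> i0 * (\<eta> - \<delta> - \<delta>) \<le> x_ave n (X ?t)"
    "x_ave n (X ?t) \<le> 1 - c + control_gain n \<omega> j0 * (\<eta> - \<delta> - \<delta>)"
    using separation(2) target(3,4) steered(2) by (auto simp: algebra_simps abs_le_iff)
  have "\<rho> \<le> r i0" "\<rho> \<le> r j0" "\<omega> i0 \<le> 1" "\<omega> j0 \<le> 1"
    using agents radius(2) belief(2) by (auto simp: less_imp_le)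
  from step_C6_separates[OF agents(1,2) steered(1) this noise[OF order_refl] policy_final separation(1) window]
  have "step_C6 n r \<omega> (X ?t) (\<lambda>j i. policy ?t (X ?t) i) (B ?t) \<in> E_set n c" .
  then show ?thesis
    using run[of ?t] by simp
qed

lemma reachable: "ft_robustly_reachable n r \<omega> \<eta> (E_set n c)"
proof -
  let ?D = "\<lambda>(t::nat) (h::(nat \<Rightarrow> real) list) (i::nat). \<delta>"
  let ?U = "\<lambda>t h (j::nat) i. policy t (last h) i"
  have reach: "\<exists>t\<in>{1..Suc (T1 + T2)}. traj_C6 n r \<omega> x0 ?D ?U B t \<in> E_set n c"
    if x0: "x0 \<in> cube n"
      and noise: "\<forall>t<Suc (T1 + T2). \<forall>i<n. \<forall>j\<in>nbr n r (traj_C6 n r \<omega> x0 ?D ?U B t) i - {i}.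
        \<bar>B t j i\<bar> \<le> \<delta>" for x0 B
  proof -
    have "\<And>t. t \<le> T1 + T2 \<Longrightarrow>
        \<forall>i<n. \<forall>j\<in>nbr n r (traj_C6 n r \<omega> x0 ?D ?U B t) i - {i}. \<bar>B t j i\<bar> \<le> \<delta>"
      using noise by simp
    with x0 have "traj_C6 n r \<omega> x0 ?D ?U B (Suc (T1 + T2)) \<in> E_set n c"
      by (intro run_reaches_E_set) (simp_all add: traj_C6_0 traj_C6_Suc traj_C6_def[symmetric])
    then show ?thesis
      by force
  qed
  show ?thesis
    unfolding ft_robustly_reachable_def using steer_step_bounds noise_level policy_abs_le reach
    by (intro exI[of _ "Suc (T1 + T2)"] exI[of _ \<delta>] conjI ballI disjI2 exI[of _ ?D] exI[of _ ?U]) auto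
qed

end

lemma ex_minimizer:
  fixes f :: "nat \<Rightarrow> 'a::linorder"
  assumes "0 < n"
  shows "\<exists>k<n. \<forall>i<n. f k \<le> f i"
proof -
  have "Min (f ` {..<n}) \<in> f ` {..<n}"
    using assms by (intro Min_in) auto
  then obtain k where "k < n" "f k = Min (f ` {..<n})"
    by auto
  then show ?thesis
    by (metis Min_le finite_imageI finite_lessThan image_eqI lessThan_iff)
qed

lemma Max_a_coef_attained:
  assumes "2 \<le> n"
  shows "\<exists>i0 j0. i0 < n \<and> j0 < n \<and> i0 \<noteq> j0
    \<and> Max {a_coef n \<omega> \<eta> i j | i j. i < n \<and> j < n \<and> i \<noteq> j} = a_coef n \<omega> \<eta> i0 j0"
proof -
  let ?A = "{a_coef n \<omega> \<eta> i j | i j. i < n \<and> j < n \<and> i \<noteq> j}"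
  have "finite ?A"
    by (rule finite_subset[of _ "(\<lambda>(i, j). a_coef n \<omega> \<eta> i j) ` ({..<n} \<times> {..<n})"]) auto
  moreover have "a_coef n \<omega> \<eta> 0 1 \<in> ?A"
    using assms by fastforce
  ultimately have "Max ?A \<in> ?A"
    by (intro Max_in) auto
  then show ?thesis
    by auto
qed

lemma target_window:
  fixes g0 g1 gm \<eta> \<epsilon> \<delta> c :: real
  assumes "0 < gm" "gm \<le> g0" "gm \<le> g1" "g0 < 1" "g1 < 1"
    and "0 < \<delta>" "2 * \<delta> \<le> 1" "4 * \<delta> \<le> \<epsilon>" "4 * \<delta> \<le> gm * \<eta>"
    and c: "c = min ((g0 + g1) * \<eta> - 2 * \<epsilon>) 1"
  shows "c \<le> (g0 + g1) * (\<eta> - 2 * \<delta>)"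
    and "\<exists>\<tau>. 0 \<le> \<tau> \<and> \<tau> \<le> 1 \<and> c - g0 * (\<eta> - 2 * \<delta>) \<le> \<tau> - \<delta>
      \<and> \<tau> + \<delta> \<le> 1 - c + g1 * (\<eta> - 2 * \<delta>)"
proof -
  have "0 < \<eta>"
    using assms(1,6,9) by (smt (verit) mult_nonneg_nonpos)
  then have "gm * \<eta> \<le> \<eta>"
    using assms(2,4) by (simp add: mult_left_le_one_le)
  then have half: "\<eta> / 2 \<le> \<eta> - 2 * \<delta>"
    using assms(9) by linarith
  have reach: "2 * \<delta> \<le> g * (\<eta> - 2 * \<delta>)" if "gm \<le> g" for g
  proof -
    have "gm * (\<eta> / 2) \<le> g * (\<eta> - 2 * \<delta>)"
      using that half assms(1) \<open>0 < \<eta>\<close> by (intro mult_mono) auto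
    then show ?thesis
      using assms(9) by simp
  qed
  have "(g0 + g1) * (2 * \<delta>) \<le> 2 * (2 * \<delta>)"
    using assms(4-6) by (intro mult_right_mono) auto
  moreover have "(g0 + g1) * (\<eta> - 2 * \<delta>) = (g0 + g1) * \<eta> - (g0 + g1) * (2 * \<delta>)"
    by (simp add: algebra_simps)
  moreover have "c \<le> (g0 + g1) * \<eta> - 2 * \<epsilon>"
    using c by simp
  ultimately have sum: "c + 2 * \<delta> \<le> (g0 + g1) * (\<eta> - 2 * \<delta>)"
    using assms(6,8) by linarith
  then show "c \<le> (g0 + g1) * (\<eta> - 2 * \<delta>)"
    using assms(6) by linarith
  define lo where "lo = max 0 (c - g0 * (\<eta> - 2 * \<delta>))"
  define hi where "hi = min 1 (1 - c + g1 * (\<eta> - 2 * \<delta>))"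
  have "lo + 2 * \<delta> \<le> hi"
    using reach[OF assms(2)] reach[OF assms(3)] sum c assms(7)
    by (auto simp: lo_def hi_def algebra_simps)
  moreover have "0 \<le> lo" "c - g0 * (\<eta> - 2 * \<delta>) \<le> lo" "hi \<le> 1" "hi \<le> 1 - c + g1 * (\<eta> - 2 * \<delta>)"
    by (simp_all add: lo_def hi_def)
  ultimately show "\<exists>\<tau>. 0 \<le> \<tau> \<and> \<tau> \<le> 1 \<and> c - g0 * (\<eta> - 2 * \<delta>) \<le> \<tau> - \<delta>
      \<and> \<tau> + \<delta> \<le> 1 - c + g1 * (\<eta> - 2 * \<delta>)"
    using assms(6) by (intro exI[of _ "(lo + hi) / 2"] conjI) (simp_all add: field_simps)
qed

lemma three_phase_plan_exists:
  assumes "n \<ge> 3" and r: "\<forall>i<n. 0 < r i \<and> r i \<le> 1" and \<omega>: "\<forall>i<n. 0 < \<omega> i \<and> \<omega> i < 1"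
    and "0 < \<epsilon>" "\<epsilon> < \<eta>"
    and c: "c = min (Max {a_coef n \<omega> \<eta> i j | i j. i < n \<and> j < n \<and> i \<noteq> j} - 2 * \<epsilon>) 1"
  shows "\<exists>i0 j0 \<rho> wm gm \<delta> \<tau> T1 T2. three_phase_plan n r \<omega> \<eta> i0 j0 \<rho> wm gm \<delta> \<tau> c T1 T2"
proof -
  have n: "2 \<le> n" "0 < n"
    using assms(1) by auto
  obtain kr kw kg where k: "kr < n" "kw < n" "kg < n"
    and min: "\<forall>i<n. r kr \<le> r i" "\<forall>i<n. \<omega> kw \<le> \<omega> i" "\<forall>i<n. control_gain n \<omega> kg \<le> control_gain n \<omega> i"
    using ex_minimizer[OF n(2), of r] ex_minimizer[OF n(2), of \<omega>] ex_minimizer[OF n(2), of "control_gain n \<omega>"]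
    by blast
  define \<rho> wm gm where "\<rho> = r kr" and "wm = \<omega> kw" and "gm = control_gain n \<omega> kg"
  obtain i0 j0 where ij: "i0 < n" "j0 < n" "i0 \<noteq> j0"
    and "Max {a_coef n \<omega> \<eta> i j | i j. i < n \<and> j < n \<and> i \<noteq> j} = a_coef n \<omega> \<eta> i0 j0"
    using Max_a_coef_attained[OF n(1)] by blast
  then have c: "c = min ((control_gain n \<omega> i0 + control_gain n \<omega> j0) * \<eta> - 2 * \<epsilon>) 1"
    using c by (simp add: a_coef_eq_control_gain)
  define \<delta> where "\<delta> = min (\<epsilon> / 4) (min (gm * \<eta> / 4) (wm * \<rho> / 4))"
  have pos: "0 < \<rho>" "\<rho> \<le> 1" "0 < wm" "wm < 1" "0 < gm"
    using r \<omega> k control_gain_pos[OF n(1)] by (auto simp: \<rho>_def wm_def gm_def)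
  then have "wm * \<rho> \<le> 1"
    by (simp add: mult_le_one)
  then have \<delta>: "0 < \<delta>" "2 * \<delta> \<le> 1" "4 * \<delta> \<le> \<epsilon>" "4 * \<delta> \<le> gm * \<eta>" "4 * \<delta> \<le> wm * \<rho>"
    using pos \<open>0 < \<epsilon>\<close> \<open>\<epsilon> < \<eta>\<close> by (auto simp: \<delta>_def)
  have "control_gain n \<omega> i0 < 1" "control_gain n \<omega> j0 < 1"
    using \<omega> ij by (auto intro: control_gain_less_1 less_imp_le)
  note window = target_window[OF pos(5) min(3)[rule_format, OF ij(1), folded gm_def]
      min(3)[rule_format, OF ij(2), folded gm_def] this \<delta>(1-4) c]
  then obtain \<tau> where "0 \<le> \<tau>" "\<tau> \<le> 1" "c - control_gain n \<omega> i0 * (\<eta> - 2 * \<delta>) \<le> \<tau> - \<delta>"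
    "\<tau> + \<delta> \<le> 1 - c + control_gain n \<omega> j0 * (\<eta> - 2 * \<delta>)"
    by blast
  moreover obtain T1 where "(1 - wm) ^ T1 < \<rho> / 2"
    using real_arch_pow_inv[of "\<rho> / 2" "1 - wm"] pos by auto
  moreover obtain T2 :: nat where "2 < real T2 * (gm * (\<eta> - \<delta>))"
    using reals_Archimedean3[of "gm * (\<eta> - \<delta>)"] pos \<delta> \<open>\<epsilon> < \<eta>\<close> by auto
  ultimately have "three_phase_plan n r \<omega> \<eta> i0 j0 \<rho> wm gm \<delta> \<tau> c T1 T2"
    using ij pos min \<omega> \<delta> window(1) by unfold_locales (auto simp: \<rho>_def wm_def gm_def c)
  then show ?thesis
    by blast
qed

theorem lemma8:
  fixes n :: nat and r \<omega> :: "nat \<Rightarrow> real" and \<eta> \<epsilon> :: real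
  assumes "n \<ge> 3"
    and "\<forall>i<n. 0 < r i \<and> r i \<le> 1"
    and "\<forall>i<n. 0 < \<omega> i \<and> \<omega> i < 1"
    and "\<eta> > 0"
    and "0 < \<epsilon>" and "\<epsilon> < \<eta>"
  shows "ft_robustly_reachable n r \<omega> \<eta>
           (E_set n (min (Max {a_coef n \<omega> \<eta> i j | i j. i < n \<and> j < n \<and> i \<noteq> j} - 2 * \<epsilon>) 1))"
proof -
  obtain i0 j0 \<rho> wm gm \<delta> \<tau> T1 T2 where
    "three_phase_plan n r \<omega> \<eta> i0 j0 \<rho> wm gm \<delta> \<tau>
      (min (Max {a_coef n \<omega> \<eta> i j | i j. i < n \<and> j < n \<and> i \<noteq> j} - 2 * \<epsilon>) 1) T1 T2"
    using three_phase_plan_exists[OF assms(1-3,5,6) refl] by blast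
  then show ?thesis
    by (rule three_phase_plan.reachable)
qed

end
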